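(* Let $S$ be a finite connected poset and let $\varphi$ be a monotone random dynamical system with independent increments on $S$ whose one-point motions are irreducible (time-homogeneous) Markov chains. Then, with $T(\omega):=\inf\{t>0:\ \varphi(t,\theta_{-t}\omega)\text{ is a constant map}\}$, we have $\mathbb{P}(T<+\infty)=1$.
   Context: Let $(\Omega,\mathcal{F},\mathbb{P})$ be a probability space and $(\theta_t)_{t\in\mathbb{R}}$ a one-parameter group of $\mathbb{P}$-preserving measurable maps ($\theta_{t+s}=\theta_t\circ\theta_s$, $\theta_0=\mathrm{Id}$), jointly measurable in $(t,\omega)$. A random dynamical system (RDS) on $S$ is a measurable $\varphi:[0,\infty)\times\Omega\to S^S$ with $\varphi(0,\omega)=\mathrm{Id}$ and $\varphi(t+s,\omega)=\varphi(t,\theta_s\omega)\circ\varphi(s,\omega)$. It has independent increments if for all $0\le t_0<\dots<t_n$ the variables $\varphi(t_i-t_{i-1},\theta_{t_{i-1}}\cdot)$, $i=1,\dots,n$, are independent. One-point motions: $(\varphi(t,\cdot)(x))_{t\ge0}$, $x\in S$. The RDS is monotone if $\varphi(t,\omega)$ is an increasing map $S\to S$ for every $t\ge0$ and $\omega$. A poset is connected if any two points are joined by a finite sequence of points in which consecutive points are comparable. $\inf\emptyset=+\infty$. *)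

theory Defs
  imports "HOL-Probability.Probability"
begin

definition connected_poset :: "'a::order itself \<Rightarrow> bool" where
  "connected_poset _ \<longleftrightarrow> (\<forall>x y::'a. (\<lambda>a b. a \<le> b \<or> b \<le> a)\<^sup>*\<^sup>* x y)"

definition markov_chain_from ::
  "'w measure \<Rightarrow> (real \<Rightarrow> 'w \<Rightarrow> 'a) \<Rightarrow> 'a \<Rightarrow> (real \<Rightarrow> 'a \<Rightarrow> 'a \<Rightarrow> real) \<Rightarrow> bool" where
  "markov_chain_from M X x0 P \<longleftrightarrow>
     (\<forall>(n::nat) (t::nat \<Rightarrow> real) (xs::nat \<Rightarrow> 'a).
        t 0 = 0 \<longrightarrow> xs 0 = x0 \<longrightarrow> (\<forall>i<n. t i \<le> t (Suc i)) \<longrightarrow>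
        measure M {\<omega>\<in>space M. \<forall>i\<in>{1..n}. X (t i) \<omega> = xs i}
          = (\<Prod>i\<in>{1..n}. P (t i - t (i - 1)) (xs (i - 1)) (xs i)))"

definition irreducible_transition :: "(real \<Rightarrow> 'a \<Rightarrow> 'a \<Rightarrow> real) \<Rightarrow> bool" where
  "irreducible_transition P \<longleftrightarrow> (\<forall>y z. \<exists>t>0. P t y z > 0)"

text \<open>Coalescence time T(\<omega>) = inf{t>0. \<phi>(t,\<theta>_{-t}\<omega>) is constant}, with inf {} = +\<infinity>.\<close>
definition coalescence_time ::
  "(real \<Rightarrow> 'w \<Rightarrow> 'w) \<Rightarrow> (real \<Rightarrow> 'w \<Rightarrow> 'a \<Rightarrow> 'a) \<Rightarrow> 'w \<Rightarrow> ereal" where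
  "coalescence_time \<theta> \<phi> \<omega> =
     (INF t\<in>{t::real. t > 0 \<and> (\<exists>c. \<forall>y. \<phi> t (\<theta> (-t) \<omega>) y = c)}. ereal t)"

end

theory Submission
  imports Defs
begin

text \<open>If a monotone map \<open>g\<close> is not constant, connectedness provides \<open>x \<le> y\<close> with
  \<open>g x \<noteq> g y\<close>. Irreducibility of the one-point motion from \<open>g y\<close> yields a realisation \<open>f\<close>
  of the flow, of positive probability, sending \<open>g y\<close> to a minimal point \<open>m\<close>; being monotone,
  \<open>f\<close> also sends \<open>g x\<close> to \<open>m\<close>, so \<open>f \<circ> g\<close> has a smaller range. Composing such realisations
  over independent increments, \<open>\<phi>(\<tau>,\<cdot>)\<close> is constant with some probability \<open>p > 0\<close>. Then
  \<open>\<phi>(k\<tau>,\<cdot>)\<close> is non-constant only if all \<open>k\<close> independent increments over the intervals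
  \<open>[i\<tau>, (i+1)\<tau>]\<close> are, which has probability \<open>(1 - p)\<^sup>k\<close>; as \<open>\<theta>\<close> preserves the measure,
  the same bound holds for \<open>\<phi>(k\<tau>, \<theta>(-k\<tau>) \<cdot>)\<close>, so the coalescence time is finite almost
  surely.\<close>

definition constant_map :: "('a \<Rightarrow> 'b) \<Rightarrow> bool" where
  "constant_map h \<longleftrightarrow> (\<exists>c. \<forall>y. h y = c)"

lemma constant_map_comp_inner: "constant_map h \<Longrightarrow> constant_map (f \<circ> h)"
  unfolding constant_map_def by auto

lemma constant_map_comp_outer: "constant_map f \<Longrightarrow> constant_map (f \<circ> h)"
  unfolding constant_map_def by auto

lemma coalescence_time_less_infinity_iff:
  "coalescence_time \<theta> \<phi> \<omega> < \<infinity> \<longleftrightarrow> (\<exists>t>0. constant_map (\<phi> t (\<theta> (-t) \<omega>)))"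
proof
  assume finite: "coalescence_time \<theta> \<phi> \<omega> < \<infinity>"
  show "\<exists>t>0. constant_map (\<phi> t (\<theta> (-t) \<omega>))"
  proof (rule ccontr)
    assume "\<not> (\<exists>t>0. constant_map (\<phi> t (\<theta> (-t) \<omega>)))"
    then have no_time: "{t. t > 0 \<and> (\<exists>c. \<forall>y. \<phi> t (\<theta> (-t) \<omega>) y = c)} = {}"
      unfolding constant_map_def by auto
    have "coalescence_time \<theta> \<phi> \<omega> = \<infinity>"
      unfolding coalescence_time_def no_time by (simp add: top_ereal_def)
    with finite show False by simp
  qed
next
  assume "\<exists>t>0. constant_map (\<phi> t (\<theta> (-t) \<omega>))"
  then obtain t where "t > 0" "constant_map (\<phi> t (\<theta> (-t) \<omega>))" by blast
  then have "coalescence_time \<theta> \<phi> \<omega> \<le> ereal t"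
    unfolding coalescence_time_def constant_map_def by (intro INF_lower) simp
  then show "coalescence_time \<theta> \<phi> \<omega> < \<infinity>"
    using order_le_less_trans by fastforce
qed

lemma rtranclp_values_differ_imp_step:
  assumes "R\<^sup>*\<^sup>* a b" and "g a \<noteq> g b"
  shows "\<exists>x y. R x y \<and> g x \<noteq> g y"
  using assms by (induction rule: rtranclp_induct) (simp, metis)

lemma connected_poset_nonconstant_map:
  fixes g :: "'a::order \<Rightarrow> 'b"
  assumes "connected_poset TYPE('a)" and "\<not> constant_map g"
  shows "\<exists>x y. x \<le> y \<and> g x \<noteq> g y"
proof -
  from assms(2) obtain b where "g undefined \<noteq> g b"
    unfolding constant_map_def by metis
  moreover have "(\<lambda>a b. a \<le> b \<or> b \<le> a)\<^sup>*\<^sup>* undefined b"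
    using assms(1) unfolding connected_poset_def by blast
  ultimately obtain x y where "x \<le> y \<or> y \<le> x" "g x \<noteq> g y"
    using rtranclp_values_differ_imp_step[where g = g] by blast
  then show ?thesis by (metis (no_types))
qed

lemma card_range_comp_less:
  fixes g :: "'a::finite \<Rightarrow> 'b"
  assumes "g x \<noteq> g y" and "f (g x) = f (g y)"
  shows "card (range (f \<circ> g)) < card (range g)"
proof -
  have "\<not> inj_on f (range g)"
    using assms unfolding inj_on_def by blast
  then have "card (f ` range g) \<noteq> card (range g)"
    using inj_on_iff_eq_card[of "range g" f] by simp
  moreover have "card (f ` range g) \<le> card (range g)"
    by (rule card_image_le) simp
  ultimately show ?thesis by (simp add: image_comp)
qed

lemma markov_chain_from_measure_at:
  assumes "markov_chain_from M X x0 P" and "0 \<le> t"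
  shows "measure M {\<omega>\<in>space M. X t \<omega> = z} = P t x0 z"
  using assms(1)[unfolded markov_chain_from_def, rule_format, where n = 1
      and t = "\<lambda>i. if i = 0 then 0 else t" and xs = "\<lambda>i. if i = 0 then x0 else z"] assms(2)
  by simp

lemma (in finite_measure) measure_pos_imp_value_pos:
  fixes X :: "'a \<Rightarrow> 'b::finite"
  assumes X: "X \<in> M \<rightarrow>\<^sub>M count_space UNIV"
    and pos: "0 < measure M {\<omega>\<in>space M. X \<omega> \<in> A}"
  shows "\<exists>a\<in>A. 0 < measure M {\<omega>\<in>space M. X \<omega> = a}"
proof (rule ccontr)
  assume "\<not> ?thesis"
  then have zero: "measure M {\<omega>\<in>space M. X \<omega> = a} = 0" if "a \<in> A" for a
    using that by (meson measure_nonneg not_less order_antisym)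
  have "{\<omega>\<in>space M. X \<omega> = a} \<in> sets M" for a
    using measurable_sets[OF X, of "{a}"] by (simp add: vimage_def Int_def conj_commute)
  then have "measure M (\<Union>a\<in>A. {\<omega>\<in>space M. X \<omega> = a})
      \<le> (\<Sum>a\<in>A. measure M {\<omega>\<in>space M. X \<omega> = a})"
    by (intro finite_measure_subadditive_finite) auto
  moreover have "(\<Union>a\<in>A. {\<omega>\<in>space M. X \<omega> = a}) = {\<omega>\<in>space M. X \<omega> \<in> A}"
    by auto
  ultimately show False
    using pos zero by simp
qed

locale rds_independent_increments = prob_space M
  for M :: "'w measure" and \<theta> :: "real \<Rightarrow> 'w \<Rightarrow> 'w" and \<phi> :: "real \<Rightarrow> 'w \<Rightarrow> 'a \<Rightarrow> 'a" +
  assumes theta_meas: "(\<lambda>p. \<theta> (fst p) (snd p)) \<in> measurable (borel \<Otimes>\<^sub>M M) M"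
    and theta_pres: "\<And>t. distr M M (\<theta> t) = M"
    and theta_0: "\<And>\<omega>. \<omega> \<in> space M \<Longrightarrow> \<theta> 0 \<omega> = \<omega>"
    and theta_add: "\<And>t s \<omega>. \<omega> \<in> space M \<Longrightarrow> \<theta> (t + s) \<omega> = \<theta> t (\<theta> s \<omega>)"
    and phi_meas: "(\<lambda>p. \<phi> (fst p) (snd p))
                     \<in> measurable (restrict_space borel {0..} \<Otimes>\<^sub>M M) (count_space UNIV)"
    and phi_cocycle: "\<And>t s \<omega>. 0 \<le> t \<Longrightarrow> 0 \<le> s \<Longrightarrow> \<omega> \<in> space M \<Longrightarrow>
                        \<phi> (t + s) \<omega> = \<phi> t (\<theta> s \<omega>) \<circ> \<phi> s \<omega>"
    and indep_incr: "\<And>(n::nat) (t::nat \<Rightarrow> real). 0 \<le> t 0 \<Longrightarrow> (\<forall>i<n. t i < t (Suc i)) \<Longrightarrow>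
                        indep_vars (\<lambda>_. count_space UNIV)
                          (\<lambda>i \<omega>. \<phi> (t (Suc i) - t i) (\<theta> (t i) \<omega>)) {..<n}"
begin

lemma measurable_theta: "\<theta> t \<in> M \<rightarrow>\<^sub>M M"
proof -
  have "Pair t \<in> M \<rightarrow>\<^sub>M borel \<Otimes>\<^sub>M M"
    by (rule measurable_Pair1') simp
  from measurable_comp[OF this theta_meas] show ?thesis
    by (simp add: comp_def)
qed

lemma theta_in_space: "\<omega> \<in> space M \<Longrightarrow> \<theta> t \<omega> \<in> space M"
  using measurable_space[OF measurable_theta] .

lemma measurable_phi:
  assumes "0 \<le> u"
  shows "\<phi> u \<in> M \<rightarrow>\<^sub>M count_space UNIV"
proof -
  have "Pair u \<in> M \<rightarrow>\<^sub>M restrict_space borel {0..} \<Otimes>\<^sub>M M"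
    by (intro measurable_Pair1') (simp add: assms)
  from measurable_comp[OF this phi_meas] show ?thesis
    by (simp add: comp_def)
qed

lemma sets_phi: "0 \<le> u \<Longrightarrow> {\<omega>\<in>space M. Q (\<phi> u \<omega>)} \<in> events"
  using measurable_sets[OF measurable_phi, of u "{h. Q h}"]
  by (simp add: vimage_def Int_def conj_commute)

lemma sets_phi_theta: "0 \<le> u \<Longrightarrow> {\<omega>\<in>space M. Q (\<phi> u (\<theta> s \<omega>))} \<in> events"
  using measurable_sets[OF measurable_comp[OF measurable_theta measurable_phi], of u "{h. Q h}" s]
  by (simp add: vimage_def Int_def conj_commute)

lemma prob_phi_theta:
  assumes "0 \<le> u"
  shows "prob {\<omega>\<in>space M. Q (\<phi> u (\<theta> s \<omega>))} = prob {\<omega>\<in>space M. Q (\<phi> u \<omega>)}"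
proof -
  have "prob {\<omega>\<in>space M. Q (\<phi> u \<omega>)} = measure (distr M M (\<theta> s)) {\<omega>\<in>space M. Q (\<phi> u \<omega>)}"
    by (simp add: theta_pres)
  also have "\<dots> = prob (\<theta> s -` {\<omega>\<in>space M. Q (\<phi> u \<omega>)} \<inter> space M)"
    by (rule measure_distr[OF measurable_theta sets_phi[OF assms]])
  also have "\<theta> s -` {\<omega>\<in>space M. Q (\<phi> u \<omega>)} \<inter> space M = {\<omega>\<in>space M. Q (\<phi> u (\<theta> s \<omega>))}"
    using theta_in_space by auto
  finally show ?thesis by simp
qed

lemma prob_two_increments:
  assumes "0 < u" and "0 < v"
  shows "prob {\<omega>\<in>space M. \<phi> u \<omega> \<in> A \<and> \<phi> v (\<theta> u \<omega>) \<in> B}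
    = prob {\<omega>\<in>space M. \<phi> u \<omega> \<in> A} * prob {\<omega>\<in>space M. \<phi> v \<omega> \<in> B}"
proof -
  define t :: "nat \<Rightarrow> real" where "t i = (if i = 0 then 0 else if i = 1 then u else u + v)" for i
  define X where "X = (\<lambda>i \<omega>. \<phi> (t (Suc i) - t i) (\<theta> (t i) \<omega>))"
  define C where "C i = (if i = 0 then A else B)" for i :: nat
  have "indep_vars (\<lambda>_. count_space UNIV) X {..<2}"
    unfolding X_def using assms by (intro indep_incr) (auto simp: t_def less_Suc_eq numeral_2_eq_2)
  then have "prob (\<Inter>i\<in>{..<2}. X i -` C i \<inter> space M) = (\<Prod>i\<in>{..<2}. prob (X i -` C i \<inter> space M))"
    by (rule indep_varsD_finite) (auto simp: numeral_2_eq_2)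
  moreover have "(\<Inter>i\<in>{..<2}. X i -` C i \<inter> space M) = {\<omega>\<in>space M. \<phi> u \<omega> \<in> A \<and> \<phi> v (\<theta> u \<omega>) \<in> B}"
    by (auto simp: X_def t_def C_def theta_0 numeral_2_eq_2 lessThan_Suc)
  moreover have "X 0 -` C 0 \<inter> space M = {\<omega>\<in>space M. \<phi> u \<omega> \<in> A}"
    by (auto simp: X_def t_def C_def theta_0)
  moreover have "X 1 -` C 1 \<inter> space M = {\<omega>\<in>space M. \<phi> v (\<theta> u \<omega>) \<in> B}"
    by (auto simp: X_def t_def C_def)
  ultimately show ?thesis
    using prob_phi_theta[of v "\<lambda>h. h \<in> B" u] assms by (simp add: numeral_2_eq_2)
qed

lemma prob_constant_comp_concat:
  assumes "0 < u" and "0 < v"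
    and "0 < prob {\<omega>\<in>space M. \<phi> u \<omega> = f}"
    and "0 < prob {\<omega>\<in>space M. constant_map (\<phi> v \<omega> \<circ> (f \<circ> g))}"
  shows "0 < prob {\<omega>\<in>space M. constant_map (\<phi> (v + u) \<omega> \<circ> g)}"
proof -
  let ?E = "{\<omega>\<in>space M. \<phi> u \<omega> \<in> {f} \<and> \<phi> v (\<theta> u \<omega>) \<in> {h. constant_map (h \<circ> (f \<circ> g))}}"
  have "prob ?E = prob {\<omega>\<in>space M. \<phi> u \<omega> = f} * prob {\<omega>\<in>space M. constant_map (\<phi> v \<omega> \<circ> (f \<circ> g))}"
    using prob_two_increments[OF assms(1,2), of "{f}" "{h. constant_map (h \<circ> (f \<circ> g))}"] by simp
  also have "\<dots> > 0"
    using assms(3,4) by simp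
  finally have "0 < prob ?E" .
  moreover have "?E \<subseteq> {\<omega>\<in>space M. constant_map (\<phi> (v + u) \<omega> \<circ> g)}"
  proof
    fix \<omega> assume \<omega>: "\<omega> \<in> ?E"
    then have "\<phi> (v + u) \<omega> \<circ> g = \<phi> v (\<theta> u \<omega>) \<circ> (f \<circ> g)"
      using phi_cocycle[of v u \<omega>] assms(1,2) by (simp add: o_assoc)
    with \<omega> show "\<omega> \<in> {\<omega>\<in>space M. constant_map (\<phi> (v + u) \<omega> \<circ> g)}"
      by simp
  qed
  then have "prob ?E \<le> prob {\<omega>\<in>space M. constant_map (\<phi> (v + u) \<omega> \<circ> g)}"
    using assms(1,2) by (intro finite_measure_mono sets_phi) simp_all
  ultimately show ?thesis
    by linarith
qed

lemma constant_map_phi_multiple: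
  assumes "0 \<le> \<tau>" and "\<omega> \<in> space M" and "\<exists>i<k. constant_map (\<phi> \<tau> (\<theta> (real i * \<tau>) \<omega>))"
  shows "constant_map (\<phi> (real k * \<tau>) \<omega>)"
  using assms(3)
proof (induction k)
  case 0
  then show ?case by simp
next
  case (Suc k)
  have "real (Suc k) * \<tau> = \<tau> + real k * \<tau>"
    by (simp add: algebra_simps)
  then have split: "\<phi> (real (Suc k) * \<tau>) \<omega> = \<phi> \<tau> (\<theta> (real k * \<tau>) \<omega>) \<circ> \<phi> (real k * \<tau>) \<omega>"
    using phi_cocycle[of \<tau> "real k * \<tau>" \<omega>] assms(1,2) by simp
  from Suc.prems obtain i where "i < Suc k" "constant_map (\<phi> \<tau> (\<theta> (real i * \<tau>) \<omega>))"
    by blast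
  then show ?case
    using Suc.IH split constant_map_comp_inner constant_map_comp_outer by (metis less_SucE)
qed

lemma prob_not_constant_multiple_le:
  assumes "0 < \<tau>"
  shows "prob {\<omega>\<in>space M. \<not> constant_map (\<phi> (real k * \<tau>) \<omega>)}
    \<le> (1 - prob {\<omega>\<in>space M. constant_map (\<phi> \<tau> \<omega>)}) ^ k"
proof (cases "k = 0")
  case True
  then show ?thesis by simp
next
  case False
  define E where "E i = {\<omega>\<in>space M. \<not> constant_map (\<phi> \<tau> (\<theta> (real i * \<tau>) \<omega>))}" for i :: nat
  have indep: "indep_vars (\<lambda>_. count_space UNIV) (\<lambda>i \<omega>. \<phi> \<tau> (\<theta> (real i * \<tau>) \<omega>)) {..<k}"
    using indep_incr[of "\<lambda>i. real i * \<tau>" k] assms by (simp add: algebra_simps)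
  have prob_E: "prob (E i) = 1 - prob {\<omega>\<in>space M. constant_map (\<phi> \<tau> \<omega>)}" for i
  proof -
    have "space M - {\<omega>\<in>space M. constant_map (\<phi> \<tau> \<omega>)} = {\<omega>\<in>space M. \<not> constant_map (\<phi> \<tau> \<omega>)}"
      by auto
    then have "prob (E i) = prob (space M - {\<omega>\<in>space M. constant_map (\<phi> \<tau> \<omega>)})"
      unfolding E_def using prob_phi_theta[of \<tau> "\<lambda>h. \<not> constant_map h"] assms by simp
    then show ?thesis
      using prob_compl[OF sets_phi] assms by simp
  qed
  have prob_Inter: "prob (\<Inter>i<k. E i) = (\<Prod>i<k. prob (E i))"
    using indep_varsD_finite[where A = "\<lambda>_. {h. \<not> constant_map h}", OF indep] \<open>k \<noteq> 0\<close>
    by (simp add: E_def vimage_def Int_def conj_commute lessThan_empty_iff bot_nat_def)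
  have "prob (\<Inter>i<k. E i) = (1 - prob {\<omega>\<in>space M. constant_map (\<phi> \<tau> \<omega>)}) ^ k"
    by (simp add: prob_Inter prob_E)
  moreover have "{\<omega>\<in>space M. \<not> constant_map (\<phi> (real k * \<tau>) \<omega>)} \<subseteq> (\<Inter>i<k. E i)"
    using constant_map_phi_multiple[of \<tau>] assms by (auto simp: E_def)
  moreover have "(\<Inter>i<k. E i) \<in> events"
    using False assms by (auto simp: E_def intro!: sets_phi_theta)
  ultimately show ?thesis
    using finite_measure_mono by metis
qed

lemma constant_map_pullback_mono:
  assumes "0 < t" and "t \<le> s" and "\<omega> \<in> space M" and "constant_map (\<phi> t (\<theta> (-t) \<omega>))"
  shows "constant_map (\<phi> s (\<theta> (-s) \<omega>))"
proof -
  have "\<theta> (s - t) (\<theta> (-s) \<omega>) = \<theta> (-t) \<omega>"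
    using theta_add[of \<omega> "s - t" "-s"] assms(3) by simp
  moreover have "\<phi> s (\<theta> (-s) \<omega>) = \<phi> t (\<theta> (s - t) (\<theta> (-s) \<omega>)) \<circ> \<phi> (s - t) (\<theta> (-s) \<omega>)"
    using phi_cocycle[of t "s - t" "\<theta> (-s) \<omega>"] theta_in_space assms by simp
  ultimately show ?thesis
    using assms(4) constant_map_comp_outer by metis
qed

lemma coalescence_time_finite_eq_UN:
  assumes "0 < \<tau>"
  shows "{\<omega>\<in>space M. coalescence_time \<theta> \<phi> \<omega> < \<infinity>}
    = (\<Union>k. {\<omega>\<in>space M. constant_map (\<phi> (real (Suc k) * \<tau>) (\<theta> (-(real (Suc k) * \<tau>)) \<omega>))})"
proof (intro equalityI subsetI)
  fix \<omega> assume "\<omega> \<in> {\<omega>\<in>space M. coalescence_time \<theta> \<phi> \<omega> < \<infinity>}"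
  then obtain t where \<omega>: "\<omega> \<in> space M" and t: "0 < t" "constant_map (\<phi> t (\<theta> (-t) \<omega>))"
    using coalescence_time_less_infinity_iff[of \<theta> \<phi> \<omega>] by blast
  obtain n where "t < real n * \<tau>"
    using ex_less_of_nat_mult[OF assms] by blast
  then have "t \<le> real (Suc n) * \<tau>"
    using assms by (simp add: algebra_simps)
  then have "constant_map (\<phi> (real (Suc n) * \<tau>) (\<theta> (-(real (Suc n) * \<tau>)) \<omega>))"
    using constant_map_pullback_mono[OF t(1) _ \<omega> t(2)] by simp
  with \<omega> show "\<omega> \<in> (\<Union>k. {\<omega>\<in>space M. constant_map (\<phi> (real (Suc k) * \<tau>) (\<theta> (-(real (Suc k) * \<tau>)) \<omega>))})"
    by blast
next
  fix \<omega> assume "\<omega> \<in> (\<Union>k. {\<omega>\<in>space M. constant_map (\<phi> (real (Suc k) * \<tau>) (\<theta> (-(real (Suc k) * \<tau>)) \<omega>))})"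
  then obtain k where "\<omega> \<in> space M" "constant_map (\<phi> (real (Suc k) * \<tau>) (\<theta> (-(real (Suc k) * \<tau>)) \<omega>))"
    by blast
  moreover have "0 < real (Suc k) * \<tau>"
    using assms by simp
  ultimately show "\<omega> \<in> {\<omega>\<in>space M. coalescence_time \<theta> \<phi> \<omega> < \<infinity>}"
    using coalescence_time_less_infinity_iff[of \<theta> \<phi> \<omega>] by blast
qed

lemma prob_constant_pullback_multiple_ge:
  assumes "0 < \<tau>"
  shows "1 - (1 - prob {\<omega>\<in>space M. constant_map (\<phi> \<tau> \<omega>)}) ^ k
    \<le> prob {\<omega>\<in>space M. constant_map (\<phi> (real k * \<tau>) (\<theta> (-(real k * \<tau>)) \<omega>))}"
proof -
  have "prob {\<omega>\<in>space M. constant_map (\<phi> (real k * \<tau>) (\<theta> (-(real k * \<tau>)) \<omega>))}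
      = prob {\<omega>\<in>space M. constant_map (\<phi> (real k * \<tau>) \<omega>)}"
    using prob_phi_theta[of "real k * \<tau>" constant_map] assms by simp
  also have "\<dots> = 1 - prob (space M - {\<omega>\<in>space M. constant_map (\<phi> (real k * \<tau>) \<omega>)})"
    using prob_compl[OF sets_phi[of "real k * \<tau>" constant_map]] assms by simp
  also have "space M - {\<omega>\<in>space M. constant_map (\<phi> (real k * \<tau>) \<omega>)}
      = {\<omega>\<in>space M. \<not> constant_map (\<phi> (real k * \<tau>) \<omega>)}"
    by auto
  finally show ?thesis
    using prob_not_constant_multiple_le[OF assms, of k] by simp
qed

theorem prob_coalescence_time_finite:
  assumes "0 < \<tau>" and "0 < prob {\<omega>\<in>space M. constant_map (\<phi> \<tau> \<omega>)}"
  shows "prob {\<omega>\<in>space M. coalescence_time \<theta> \<phi> \<omega> < \<infinity>} = 1"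
proof -
  define p where "p = prob {\<omega>\<in>space M. constant_map (\<phi> \<tau> \<omega>)}"
  define B where "B k = {\<omega>\<in>space M. constant_map (\<phi> (real k * \<tau>) (\<theta> (-(real k * \<tau>)) \<omega>))}"
    for k :: nat
  let ?C = "{\<omega>\<in>space M. coalescence_time \<theta> \<phi> \<omega> < \<infinity>}"
  have B_events: "B k \<in> events" for k
    unfolding B_def using sets_phi_theta[of "real k * \<tau>" constant_map] assms(1) by simp
  have lower: "1 - (1 - p) ^ k \<le> prob ?C" if k: "1 \<le> k" for k
  proof -
    obtain j where "k = Suc j"
      using k by (cases k) auto
    then have "prob (B k) \<le> prob ?C"
      unfolding coalescence_time_finite_eq_UN[OF assms(1)] B_def[symmetric]
      by (intro finite_measure_mono) (use B_events in auto)
    then show ?thesis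
      using prob_constant_pullback_multiple_ge[OF assms(1), of k] unfolding p_def B_def by linarith
  qed
  have "(\<lambda>k. 1 - (1 - p) ^ k) \<longlonglongrightarrow> 1 - 0"
    using assms(2) prob_le_1 unfolding p_def
    by (intro tendsto_diff tendsto_const LIMSEQ_realpow_zero) auto
  then have "(\<lambda>k. 1 - (1 - p) ^ k) \<longlonglongrightarrow> 1"
    by simp
  then have "1 \<le> prob ?C"
    by (rule LIMSEQ_le_const2) (use lower in blast)
  with prob_le_1[of ?C] show ?thesis
    by linarith
qed

end

locale monotone_rds = rds_independent_increments M \<theta> \<phi>
  for M :: "'w measure" and \<theta> :: "real \<Rightarrow> 'w \<Rightarrow> 'w"
    and \<phi> :: "real \<Rightarrow> 'w \<Rightarrow> 'a::{finite,order} \<Rightarrow> 'a" +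
  assumes monotone: "\<And>t \<omega>. 0 \<le> t \<Longrightarrow> \<omega> \<in> space M \<Longrightarrow> mono (\<phi> t \<omega>)"
    and connected: "connected_poset TYPE('a)"
    and one_point_irreducible:
      "\<And>x. \<exists>P. markov_chain_from M (\<lambda>t \<omega>. \<phi> t \<omega> x) x P \<and> irreducible_transition P"
begin

lemma exists_realization_hitting:
  "\<exists>u>0. \<exists>f. f x = z \<and> mono f \<and> 0 < prob {\<omega>\<in>space M. \<phi> u \<omega> = f}"
proof -
  obtain P where markov: "markov_chain_from M (\<lambda>t \<omega>. \<phi> t \<omega> x) x P"
    and "irreducible_transition P"
    using one_point_irreducible by blast
  then obtain u where u: "0 < u" and "0 < P u x z"
    unfolding irreducible_transition_def by blast
  then have "0 < prob {\<omega>\<in>space M. \<phi> u \<omega> \<in> {f. f x = z}}"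
    using markov_chain_from_measure_at[OF markov, of u z] by simp
  moreover have "\<phi> u \<in> M \<rightarrow>\<^sub>M count_space UNIV"
    using u by (simp add: measurable_phi)
  ultimately obtain f where f: "f x = z" "0 < prob {\<omega>\<in>space M. \<phi> u \<omega> = f}"
    using measure_pos_imp_value_pos by blast
  then have "{\<omega>\<in>space M. \<phi> u \<omega> = f} \<noteq> {}"
    by (metis less_irrefl measure_empty)
  then obtain \<omega> where "\<omega> \<in> space M" "\<phi> u \<omega> = f"
    by blast
  then have "mono f"
    using monotone u by force
  with f u show ?thesis by blast
qed

lemma exists_realization_shrinking_range:
  fixes g :: "'a \<Rightarrow> 'a"
  assumes "mono g" and "\<not> constant_map g"
  shows "\<exists>u>0. \<exists>f. mono f \<and> 0 < prob {\<omega>\<in>space M. \<phi> u \<omega> = f}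
    \<and> card (range (f \<circ> g)) < card (range g)"
proof -
  obtain x y where xy: "x \<le> y" "g x \<noteq> g y"
    using connected_poset_nonconstant_map[OF connected assms(2)] by blast
  obtain m where m: "m \<le> g x" "\<And>b. b \<le> m \<Longrightarrow> m = b"
    using finite_has_minimal2[of UNIV "g x"] by auto
  obtain u f where u: "0 < u" and f: "f (g y) = m" "mono f" "0 < prob {\<omega>\<in>space M. \<phi> u \<omega> = f}"
    using exists_realization_hitting by blast
  have "f (g x) \<le> m"
    using monoD[OF f(2) monoD[OF assms(1) xy(1)]] f(1) by simp
  then have "f (g x) = f (g y)"
    using m(2) f(1) by metis
  then have "card (range (f \<circ> g)) < card (range g)"
    using card_range_comp_less[of g x y f] xy(2) by blast
  with u f show ?thesis
    by blast
qed

lemma prob_constant_comp_pos: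
  fixes g :: "'a \<Rightarrow> 'a"
  assumes "mono g"
  shows "\<exists>u>0. 0 < prob {\<omega>\<in>space M. constant_map (\<phi> u \<omega> \<circ> g)}"
  using assms
proof (induction "card (range g)" arbitrary: g rule: less_induct)
  case less
  show ?case
  proof (cases "constant_map g")
    case True
    then have "{\<omega>\<in>space M. constant_map (\<phi> 1 \<omega> \<circ> g)} = space M"
      by (simp add: constant_map_comp_inner)
    then show ?thesis
      using prob_space by (intro exI[of _ 1]) simp
  next
    case False
    then obtain u f where u: "0 < u" and f: "mono f" "0 < prob {\<omega>\<in>space M. \<phi> u \<omega> = f}"
      and smaller: "card (range (f \<circ> g)) < card (range g)"
      using exists_realization_shrinking_range[OF less.prems] by blast
    have "mono (f \<circ> g)"
      using f(1) less.prems unfolding mono_def by simp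
    with smaller obtain v where "0 < v" "0 < prob {\<omega>\<in>space M. constant_map (\<phi> v \<omega> \<circ> (f \<circ> g))}"
      using less.hyps by blast
    with u f(2) show ?thesis
      by (intro exI[of _ "v + u"]) (simp add: prob_constant_comp_concat)
  qed
qed

corollary exists_prob_constant_pos: "\<exists>\<tau>>0. 0 < prob {\<omega>\<in>space M. constant_map (\<phi> \<tau> \<omega>)}"
  using prob_constant_comp_pos[of id] by (simp add: mono_def)

end

theorem mainTheorem5:
  fixes M :: "'w measure"
    and \<theta> :: "real \<Rightarrow> 'w \<Rightarrow> 'w"
    and \<phi> :: "real \<Rightarrow> 'w \<Rightarrow> ('a::{finite,order} \<Rightarrow> 'a)"
  assumes prob: "prob_space M"
    and theta_meas: "(\<lambda>p. \<theta> (fst p) (snd p)) \<in> measurable (borel \<Otimes>\<^sub>M M) M"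
    and theta_pres: "\<And>t. distr M M (\<theta> t) = M"
    and theta_0: "\<And>\<omega>. \<omega> \<in> space M \<Longrightarrow> \<theta> 0 \<omega> = \<omega>"
    and theta_add: "\<And>t s \<omega>. \<omega> \<in> space M \<Longrightarrow> \<theta> (t + s) \<omega> = \<theta> t (\<theta> s \<omega>)"
    and phi_meas: "(\<lambda>p. \<phi> (fst p) (snd p))
                     \<in> measurable (restrict_space borel {0..} \<Otimes>\<^sub>M M) (count_space UNIV)"
    and phi_0: "\<And>\<omega>. \<omega> \<in> space M \<Longrightarrow> \<phi> 0 \<omega> = id"
    and phi_cocycle: "\<And>t s \<omega>. 0 \<le> t \<Longrightarrow> 0 \<le> s \<Longrightarrow> \<omega> \<in> space M \<Longrightarrow>
                        \<phi> (t + s) \<omega> = \<phi> t (\<theta> s \<omega>) \<circ> \<phi> s \<omega>"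
    and indep_incr: "\<And>(n::nat) (t::nat \<Rightarrow> real). 0 \<le> t 0 \<Longrightarrow> (\<forall>i<n. t i < t (Suc i)) \<Longrightarrow>
                        prob_space.indep_vars M (\<lambda>_. count_space UNIV)
                          (\<lambda>i \<omega>. \<phi> (t (Suc i) - t i) (\<theta> (t i) \<omega>)) {..<n}"
    and monotone: "\<And>t \<omega>. 0 \<le> t \<Longrightarrow> \<omega> \<in> space M \<Longrightarrow> mono (\<phi> t \<omega>)"
    and connected: "connected_poset TYPE('a)"
    and one_point_markov: "\<And>x. \<exists>P. markov_chain_from M (\<lambda>t \<omega>. \<phi> t \<omega> x) x P
                                    \<and> irreducible_transition P"
  shows "measure M {\<omega> \<in> space M. coalescence_time \<theta> \<phi> \<omega> < \<infinity>} = 1"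
proof -
  interpret monotone_rds M \<theta> \<phi>
    by (intro monotone_rds.intro rds_independent_increments.intro monotone_rds_axioms.intro
        rds_independent_increments_axioms.intro prob) (fact | blast)+
  obtain \<tau> where "0 < \<tau>" "0 < prob {\<omega>\<in>space M. constant_map (\<phi> \<tau> \<omega>)}"
    using exists_prob_constant_pos by blast
  then show ?thesis
    by (rule prob_coalescence_time_finite)
qed

end
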